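(* Consider the following random variables, all defined on a common probability space (one draw from a superpopulation): a binary decision (plan) variable $P\in\{0,1\}$; a binary treatment at time 2, $A_2\in\{0,1\}$; real-valued outcomes $Y_1,Y_2$ with finite expectations; and, for $p^*\in\{0,1\}$, potential outcomes $Y_1^{p=p^*}, Y_2^{p=p^*}, A_2^{p=p^*}$ (values had $P$ been set to $p^*$). Suppose that: (i) $\Pr(A_2=a^* )>0$ for every $a^*\in\{0,1\}$; (ii) $A_2^{p=p^*}=p^*$ for every $p^*\in\{0,1\}$; (iii) $\mathbb{E}(Y_1^{p=1}\mid P=1)=\mathbb{E}(Y_1^{p=0}\mid P=1)$; (iv) $\mathbb{E}(Y_2^{p=0}-Y_1^{p=0}\mid P=1)=\mathbb{E}(Y_2^{p=0}-Y_1^{p=0}\mid P=0)$; (v) for each $p^*\in\{0,1\}$: $Y_1^{p=p^*}=Y_1$, $Y_2^{p=p^*}=Y_2$ and $A_2^{p=p^*}=A_2$ on the event $\{P=p^*\}$. Then \[ATT_P=\{\mathbb{E}(Y_2\mid A_2=1)-\mathbb{E}(Y_1\mid A_2=1)\}-\{\mathbb{E}(Y_2\mid A_2=0)-\mathbb{E}(Y_1\mid A_2=0)\},\] where $ATT_P=\mathbb{E}(Y_2^{p=1}-Y_2^{p=0}\mid P=1)$.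
   Context: Difference-in-differences setting with two time points. Superscripts denote potential outcomes (counterfactual values under a hypothetical intervention fixing $P$ to the indicated value). $P$ represents the decision/plan to implement a policy, $A_2$ its implementation at time 2 (no unit is treated at time 1), and $Y_1,Y_2$ the outcome measured at times 1 and 2. *)

theory Defs
  imports "HOL-Probability.Probability"
begin

definition cond_exp_ev :: "'a measure \<Rightarrow> ('a \<Rightarrow> real) \<Rightarrow> 'a set \<Rightarrow> real" where
  "cond_exp_ev M X B = (\<integral>x. indicator B x * X x \<partial>M) / measure M B"

end

theory Submission
  imports Defs
begin

text \<open>Since every unit's implementation follows its plan, A2 = P, so conditioning on A2 is
  conditioning on P. Then ATT is E(Y2 | P=1) minus the counterfactual mean of Y2^{p=0} given P=1;
  parallel trends (iv) rewrite the latter as the observed trend of the controls plus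
  E(Y1^{p=0} | P=1), which no anticipation (iii) and consistency (v) turn into E(Y1 | P=1).\<close>

lemma cond_exp_ev_cong:
  assumes "\<And>x. x \<in> S \<inter> space M \<Longrightarrow> f x = g x"
  shows "cond_exp_ev M f S = cond_exp_ev M g S"
proof -
  have "(\<integral>x. indicator S x * f x \<partial>M) = (\<integral>x. indicator S x * g x \<partial>M)"
    by (rule Bochner_Integration.integral_cong) (auto simp: assms split: split_indicator)
  then show ?thesis
    unfolding cond_exp_ev_def by simp
qed

lemma cond_exp_ev_diff:
  fixes f g :: "'a \<Rightarrow> real"
  assumes "S \<in> sets M" "integrable M f" "integrable M g"
  shows "cond_exp_ev M (\<lambda>x. f x - g x) S = cond_exp_ev M f S - cond_exp_ev M g S"
proof -
  have "integrable M (\<lambda>x. indicator S x * f x)" "integrable M (\<lambda>x. indicator S x * g x)"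
    using integrable_real_mult_indicator[OF assms(1)] assms(2,3) by (simp_all add: mult.commute)
  then have "(\<integral>x. indicator S x * (f x - g x) \<partial>M)
      = (\<integral>x. indicator S x * f x \<partial>M) - (\<integral>x. indicator S x * g x \<partial>M)"
    by (simp add: right_diff_distrib)
  then show ?thesis
    unfolding cond_exp_ev_def by (simp add: diff_divide_distrib)
qed

theorem proposition2:
  fixes M :: "'a measure"
    and P A2 :: "'a \<Rightarrow> nat"
    and Y1 Y2 :: "'a \<Rightarrow> real"
    and Y1p Y2p :: "nat \<Rightarrow> 'a \<Rightarrow> real"
    and A2p :: "nat \<Rightarrow> 'a \<Rightarrow> nat"
  assumes ps: "prob_space M"
    and P_meas: "P \<in> measurable M (count_space UNIV)"
    and A2_meas: "A2 \<in> measurable M (count_space UNIV)"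
    and P_bin: "\<forall>x\<in>space M. P x \<in> {0, 1}"
    and A2_bin: "\<forall>x\<in>space M. A2 x \<in> {0, 1}"
    and Y1_int: "integrable M Y1"
    and Y2_int: "integrable M Y2"
    and Y1p_int: "\<forall>p\<in>{0,1}. integrable M (Y1p p)"
    and Y2p_int: "\<forall>p\<in>{0,1}. integrable M (Y2p p)"
    and i: "\<forall>a\<in>{0::nat,1}. measure M {x\<in>space M. A2 x = a} > 0"
    and ii: "\<forall>p\<in>{0,1}. \<forall>x\<in>space M. A2p p x = p"
    and iii: "cond_exp_ev M (Y1p 1) {x\<in>space M. P x = 1}
            = cond_exp_ev M (Y1p 0) {x\<in>space M. P x = 1}"
    and iv: "cond_exp_ev M (\<lambda>x. Y2p 0 x - Y1p 0 x) {x\<in>space M. P x = 1}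
           = cond_exp_ev M (\<lambda>x. Y2p 0 x - Y1p 0 x) {x\<in>space M. P x = 0}"
    and v: "\<forall>p\<in>{0,1}. \<forall>x\<in>space M. P x = p \<longrightarrow>
              Y1p p x = Y1 x \<and> Y2p p x = Y2 x \<and> A2p p x = A2 x"
  shows "cond_exp_ev M (\<lambda>x. Y2p 1 x - Y2p 0 x) {x\<in>space M. P x = 1}
       = (cond_exp_ev M Y2 {x\<in>space M. A2 x = 1} - cond_exp_ev M Y1 {x\<in>space M. A2 x = 1})
       - (cond_exp_ev M Y2 {x\<in>space M. A2 x = 0} - cond_exp_ev M Y1 {x\<in>space M. A2 x = 0})"
proof -
  define S1 where "S1 = {x\<in>space M. P x = 1}"
  define S0 where "S0 = {x\<in>space M. P x = 0}"
  have A2_eq_P: "A2 x = P x" if "x \<in> space M" for x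
    using that P_bin ii v by fastforce
  then have A2_events: "{x\<in>space M. A2 x = 1} = S1" "{x\<in>space M. A2 x = 0} = S0"
    unfolding S1_def S0_def by auto
  have S_sets: "S1 \<in> sets M" "S0 \<in> sets M"
    unfolding S1_def S0_def using P_meas by measurable
  have integrable: "integrable M (Y1p 0)" "integrable M (Y2p 0)" "integrable M (Y2p 1)"
    using Y1p_int Y2p_int by auto
  have consistent: "cond_exp_ev M (Y2p 1) S1 = cond_exp_ev M Y2 S1"
    "cond_exp_ev M (Y1p 1) S1 = cond_exp_ev M Y1 S1"
    "cond_exp_ev M (\<lambda>x. Y2p 0 x - Y1p 0 x) S0 = cond_exp_ev M (\<lambda>x. Y2 x - Y1 x) S0"
    by (rule cond_exp_ev_cong, use v in \<open>simp add: S1_def S0_def\<close>)+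
  have "cond_exp_ev M (\<lambda>x. Y2p 1 x - Y2p 0 x) S1
      = cond_exp_ev M Y2 S1 - cond_exp_ev M (Y2p 0) S1"
    using cond_exp_ev_diff[OF S_sets(1) integrable(3,2)] consistent(1) by simp
  also have "\<dots> = cond_exp_ev M Y2 S1
      - (cond_exp_ev M (\<lambda>x. Y2p 0 x - Y1p 0 x) S1 + cond_exp_ev M (Y1p 0) S1)"
    using cond_exp_ev_diff[OF S_sets(1) integrable(2,1)] by simp
  also have "\<dots> = cond_exp_ev M Y2 S1
      - (cond_exp_ev M (\<lambda>x. Y2 x - Y1 x) S0 + cond_exp_ev M Y1 S1)"
    using iii iv consistent(2,3) unfolding S1_def S0_def by simp
  also have "\<dots> = (cond_exp_ev M Y2 S1 - cond_exp_ev M Y1 S1)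
      - (cond_exp_ev M Y2 S0 - cond_exp_ev M Y1 S0)"
    using cond_exp_ev_diff[OF S_sets(2) Y2_int Y1_int] by simp
  finally show ?thesis
    unfolding A2_events S1_def .
qed

end
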